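(* Let $G=(V\cup\{s,t\},E)$ be a directed or undirected graph with distinguished vertices $s,t$, such that the path coalitional games defined below are simple games. Then the core of (i) the Edge Path Coalitional Game (EPCG) of $G$ is non-empty if and only if there exists an edge whose removal disconnects $s$ and $t$; (ii) the Vertex Path Coalitional Game (VPCG) of $G$ is non-empty if and only if there exists a vertex whose removal disconnects $s$ and $t$; (iii) the dual $EPCG^D$ of the EPCG of $G$ is non-empty if and only if there exists an $(s,t)$ edge; (iv) the dual $VPCG^D$ of the VPCG of $G$ is non-empty if and only if there exists a vertex $x$ such that $(s,x)$ and $(x,t)$ are edges of $G$.
   Context: A coalitional game is a pair $(N,v)$ with $N$ a finite player set and $v:2^N\to\mathbb{R}_+$, $v(\varnothing)=0$. A simple game is a monotone coalitional game with $v:2^N\to\{0,1\}$, $v(\varnothing)=0$, $v(N)=1$. The EPCG of $G$ has $N=E$ and $v(S)=1$ iff the edges in $S$ contain an $s$-$t$ path, else $0$. The VPCG of $G$ has $N=V$ (the vertices other than $s,t$) and $v(S)=1$ iff the graph induced on $S\cup\{s,t\}$ contains an $s$-$t$ path, else $0$. The dual of $(N,v)$ is $(N,v^D)$ with $v^D(S)=v(N)-v(N\setminus S)$. For a payoff vector $x\in\mathbb{R}^N$ write $x(S)=\sum_{i\in S}x_i$ and $e(x,S)=x(S)-v(S)$. The core is the set of payoff vectors $x$ with $x(N)=v(N)$ and $e(x,S)\ge 0$ for all $S\subseteq N$. *)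

theory Defs
  imports Complex_Main "HOL-Library.FuncSet"
begin

definition coalitional_game :: "'p set \<Rightarrow> ('p set \<Rightarrow> real) \<Rightarrow> bool" where
  "coalitional_game N v \<longleftrightarrow> finite N \<and> v {} = 0 \<and> (\<forall>S\<subseteq>N. v S \<ge> 0)"

definition simple_game :: "'p set \<Rightarrow> ('p set \<Rightarrow> real) \<Rightarrow> bool" where
  "simple_game N v \<longleftrightarrow> coalitional_game N v \<and> (\<forall>S\<subseteq>N. v S = 0 \<or> v S = 1)
     \<and> (\<forall>S T. S \<subseteq> T \<and> T \<subseteq> N \<longrightarrow> v S \<le> v T) \<and> v {} = 0 \<and> v N = 1"

definition dual_game :: "'p set \<Rightarrow> ('p set \<Rightarrow> real) \<Rightarrow> 'p set \<Rightarrow> real" where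
  "dual_game N v S = v N - v (N - S)"

definition excess :: "('p \<Rightarrow> real) \<Rightarrow> ('p set \<Rightarrow> real) \<Rightarrow> 'p set \<Rightarrow> real" where
  "excess x v S = sum x S - v S"

text \<open>Payoff vectors in R^N are represented as functions on N (extensional, 0 outside N).\<close>
definition core :: "'p set \<Rightarrow> ('p set \<Rightarrow> real) \<Rightarrow> ('p \<Rightarrow> real) set" where
  "core N v = {x \<in> extensional N. sum x N = v N \<and> (\<forall>S\<subseteq>N. excess x v S \<ge> 0)}"

text \<open>A (multi)graph: edges of type 'e with endpoints \<open>ends e = (u,w)\<close>.
  If \<open>directed\<close> is False, edges can be traversed in both directions.\<close>

definition step :: "bool \<Rightarrow> ('e \<Rightarrow> 'v \<times> 'v) \<Rightarrow> 'e set \<Rightarrow> ('v \<times> 'v) set" where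
  "step directed ends S = {(u, w). \<exists>e\<in>S. ends e = (u, w) \<or> (\<not> directed \<and> ends e = (w, u))}"

definition connects :: "bool \<Rightarrow> ('e \<Rightarrow> 'v \<times> 'v) \<Rightarrow> 'e set \<Rightarrow> 'v \<Rightarrow> 'v \<Rightarrow> bool" where
  "connects directed ends S s t \<longleftrightarrow> (s, t) \<in> (step directed ends S)\<^sup>*"

definition induced_edges :: "('e \<Rightarrow> 'v \<times> 'v) \<Rightarrow> 'e set \<Rightarrow> 'v set \<Rightarrow> 'e set" where
  "induced_edges ends E W = {e \<in> E. fst (ends e) \<in> W \<and> snd (ends e) \<in> W}"

definition EPCG :: "bool \<Rightarrow> ('e \<Rightarrow> 'v \<times> 'v) \<Rightarrow> 'v \<Rightarrow> 'v \<Rightarrow> 'e set \<Rightarrow> real" where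
  "EPCG directed ends s t S = (if connects directed ends S s t then 1 else 0)"

definition VPCG :: "bool \<Rightarrow> ('e \<Rightarrow> 'v \<times> 'v) \<Rightarrow> 'e set \<Rightarrow> 'v \<Rightarrow> 'v \<Rightarrow> 'v set \<Rightarrow> real" where
  "VPCG directed ends E s t S =
     (if connects directed ends (induced_edges ends E (S \<union> {s, t})) s t then 1 else 0)"

definition graph :: "'v set \<Rightarrow> 'e set \<Rightarrow> ('e \<Rightarrow> 'v \<times> 'v) \<Rightarrow> 'v \<Rightarrow> 'v \<Rightarrow> bool" where
  "graph V E ends s t \<longleftrightarrow> finite V \<and> finite E \<and> s \<noteq> t \<and> s \<notin> V \<and> t \<notin> V
     \<and> (\<forall>e\<in>E. fst (ends e) \<in> V \<union> {s, t} \<and> snd (ends e) \<in> V \<union> {s, t})"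

end

theory Submission
  imports Defs
begin

text \<open>In a simple game the core is non-empty exactly when some player has veto power, i.e.
  the grand coalition without that player is losing: the whole unit can then be paid to the
  veto player, while without veto players every player \<open>i\<close> must receive \<open>x i = 0\<close>, since
  \<open>N - {i}\<close> already claims the whole unit. A player has veto power in the dual game exactly
  when it is winning on its own in the original game. For the path games, a single edge wins
  iff it is an \<open>s\<close>-\<open>t\<close> edge, and a single vertex \<open>x\<close> wins iff \<open>s x\<close> and \<open>x t\<close> are edges
  (there is no direct \<open>s\<close>-\<open>t\<close> edge because the empty coalition loses).\<close>

lemma simple_gameD:
  assumes "simple_game N v"
  shows "finite N" and "\<And>S. S \<subseteq> N \<Longrightarrow> v S = 0 \<or> v S = 1"
    and "\<And>S T. S \<subseteq> T \<Longrightarrow> T \<subseteq> N \<Longrightarrow> v S \<le> v T" and "v {} = 0" and "v N = 1"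
  using assms unfolding simple_game_def coalitional_game_def by auto

lemma core_nonempty_if_veto_player:
  assumes "simple_game N v" and i: "i \<in> N" and veto: "v (N - {i}) = 0"
  shows "core N v \<noteq> {}"
proof -
  note v = simple_gameD[OF assms(1)]
  define x where "x = restrict (\<lambda>j. if j = i then 1 else 0 :: real) N"
  have sum_x: "sum x S = (if i \<in> S then 1 else 0)" if "S \<subseteq> N" for S
  proof -
    have "sum x S = (\<Sum>j\<in>S. if j = i then 1 else 0)"
      using that unfolding x_def by (intro sum.cong) auto
    then show ?thesis using finite_subset[OF that v(1)] by (simp add: sum.delta')
  qed
  have "v S \<le> sum x S" if S: "S \<subseteq> N" for S
  proof (cases "i \<in> S")
    case True
    then show ?thesis using v(2)[OF S] sum_x[OF S] by auto
  next
    case False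
    then have "v S \<le> v (N - {i})" using S by (intro v(3)) auto
    then show ?thesis using veto sum_x[OF S] False by simp
  qed
  then have "x \<in> core N v"
    using sum_x[of N] i v(5) unfolding core_def excess_def x_def by auto
  then show ?thesis by blast
qed

lemma veto_player_if_core_nonempty:
  assumes "simple_game N v" and "core N v \<noteq> {}"
  shows "\<exists>i\<in>N. v (N - {i}) = 0"
proof (rule ccontr)
  note v = simple_gameD[OF assms(1)]
  obtain x where x: "x \<in> core N v" using assms(2) by blast
  have sum_N: "sum x N = 1" and dominates: "\<And>S. S \<subseteq> N \<Longrightarrow> v S \<le> sum x S"
    using x v(5) unfolding core_def excess_def by auto
  assume "\<not> (\<exists>i\<in>N. v (N - {i}) = 0)"
  then have winning: "v (N - {i}) = 1" if "i \<in> N" for i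
    using v(2)[of "N - {i}"] that by auto
  have "x i = 0" if i: "i \<in> N" for i
  proof -
    have "sum x N = x i + sum x (N - {i})" using sum.remove[OF v(1) i] .
    moreover have "1 \<le> sum x (N - {i})" using dominates[of "N - {i}"] winning[OF i] by auto
    moreover have "0 \<le> x i" using dominates[of "{i}"] v(2)[of "{i}"] i by auto
    ultimately show ?thesis using sum_N by linarith
  qed
  then have "sum x N = 0" by simp
  with sum_N show False by simp
qed

lemma core_nonempty_iff_veto_player:
  assumes "simple_game N v"
  shows "core N v \<noteq> {} \<longleftrightarrow> (\<exists>i\<in>N. v (N - {i}) = 0)"
  using core_nonempty_if_veto_player[OF assms] veto_player_if_core_nonempty[OF assms] by blast

lemma simple_game_dual_game:
  assumes "simple_game N v"
  shows "simple_game N (dual_game N v)"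
proof -
  note v = simple_gameD[OF assms]
  have mono: "\<forall>S T. S \<subseteq> T \<and> T \<subseteq> N \<longrightarrow> dual_game N v S \<le> dual_game N v T"
    using v(3) unfolding dual_game_def by (simp add: Diff_mono)
  have binary: "\<forall>S. dual_game N v S = 0 \<or> dual_game N v S = 1"
  proof
    fix S
    show "dual_game N v S = 0 \<or> dual_game N v S = 1"
      using v(2)[of "N - S"] v(5) unfolding dual_game_def by auto
  qed
  then have "\<forall>S. 0 \<le> dual_game N v S" by (metis order_refl zero_le_one)
  moreover have "dual_game N v {} = 0" and "dual_game N v N = 1"
    using v(4,5) unfolding dual_game_def by simp_all
  ultimately show ?thesis
    using v(1) mono binary unfolding simple_game_def coalitional_game_def by simp
qed

lemma dual_game_remove:
  assumes "i \<in> N"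
  shows "dual_game N v (N - {i}) = v N - v {i}"
  using assms unfolding dual_game_def by (simp add: double_diff)

lemma core_dual_game_nonempty_iff:
  assumes "simple_game N v"
  shows "core N (dual_game N v) \<noteq> {} \<longleftrightarrow> (\<exists>i\<in>N. v {i} = 1)"
proof -
  have "dual_game N v (N - {i}) = 0 \<longleftrightarrow> v {i} = 1" if "i \<in> N" for i
    using dual_game_remove[OF that, of v] simple_gameD(5)[OF assms] by simp
  then show ?thesis using core_nonempty_iff_veto_player[OF simple_game_dual_game[OF assms]] by auto
qed

lemma connects_singleton_iff:
  assumes "s \<noteq> t"
  shows "connects d ends {e} s t \<longleftrightarrow> ends e = (s, t) \<or> (\<not> d \<and> ends e = (t, s))"
proof
  assume "connects d ends {e} s t"
  then have "(s, t) \<in> (step d ends {e})\<^sup>+"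
    using assms unfolding connects_def by (simp add: rtrancl_eq_or_trancl)
  then obtain y z where "(s, y) \<in> step d ends {e}" and "(z, t) \<in> step d ends {e}"
    using tranclD tranclD2 by metis
  then show "ends e = (s, t) \<or> (\<not> d \<and> ends e = (t, s))"
    using assms unfolding step_def by auto
qed (auto simp: connects_def step_def)

lemma step_induced_edges:
  "step d ends (induced_edges ends E W) = step d ends E \<inter> W \<times> W"
  unfolding step_def induced_edges_def by (auto; metis fst_conv snd_conv)

lemma rtrancl_three_points_iff:
  assumes "s \<noteq> t" and "(s, t) \<notin> R"
  shows "(s, t) \<in> (R \<inter> {s, x, t} \<times> {s, x, t})\<^sup>* \<longleftrightarrow> (s, x) \<in> R \<and> (x, t) \<in> R"
proof
  let ?Q = "R \<inter> {s, x, t} \<times> {s, x, t}"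
  assume path: "(s, t) \<in> ?Q\<^sup>*"
  have "(s, x) \<in> R"
  proof (rule ccontr)
    assume "(s, x) \<notin> R"
    then have "?Q\<^sup>* `` {s} = {s}" using assms(2) by (intro Image_closed_trancl) auto
    then show False using path assms(1) by (metis Image_singleton_iff singletonD)
  qed
  moreover have "(x, t) \<in> R"
  proof (rule ccontr)
    assume "(x, t) \<notin> R"
    then have "(?Q\<inverse>)\<^sup>* `` {t} = {t}" using assms(2) by (intro Image_closed_trancl) auto
    then show False using path assms(1) by (auto simp: rtrancl_converse)
  qed
  ultimately show "(s, x) \<in> R \<and> (x, t) \<in> R" ..
next
  assume "(s, x) \<in> R \<and> (x, t) \<in> R"
  then have "(s, x) \<in> R \<inter> {s, x, t} \<times> {s, x, t}" and "(x, t) \<in> R \<inter> {s, x, t} \<times> {s, x, t}"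
    by auto
  then show "(s, t) \<in> (R \<inter> {s, x, t} \<times> {s, x, t})\<^sup>*" by (meson rtrancl.simps r_into_rtrancl)
qed

lemma VPCG_singleton_iff:
  assumes "VPCG d ends E s t {} = 0"
  shows "VPCG d ends E s t {x} = 1 \<longleftrightarrow> (s, x) \<in> step d ends E \<and> (x, t) \<in> step d ends E"
proof -
  have "\<not> connects d ends (induced_edges ends E {s, t}) s t"
    using assms unfolding VPCG_def by (auto split: if_splits)
  then have "s \<noteq> t" and "(s, t) \<notin> step d ends E"
    unfolding connects_def step_induced_edges by auto
  moreover have "{x} \<union> {s, t} = {s, x, t}" by auto
  ultimately show ?thesis
    unfolding VPCG_def connects_def step_induced_edges
    using rtrancl_three_points_iff[of s t "step d ends E" x] by simp
qed

theorem proposition1: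
  fixes V :: "'v set" and E :: "'e set" and ends :: "'e \<Rightarrow> 'v \<times> 'v"
    and s t :: 'v and directed :: bool
  assumes G: "graph V E ends s t"
  shows
    "(simple_game E (EPCG directed ends s t) \<longrightarrow>
       (core E (EPCG directed ends s t) \<noteq> {} \<longleftrightarrow>
        (\<exists>e\<in>E. \<not> connects directed ends (E - {e}) s t)))
     \<and> (simple_game V (VPCG directed ends E s t) \<longrightarrow>
       (core V (VPCG directed ends E s t) \<noteq> {} \<longleftrightarrow>
        (\<exists>x\<in>V. \<not> connects directed ends (induced_edges ends E ((V - {x}) \<union> {s, t})) s t)))
     \<and> (simple_game E (EPCG directed ends s t) \<longrightarrow>
       (core E (dual_game E (EPCG directed ends s t)) \<noteq> {} \<longleftrightarrow>
        (\<exists>e\<in>E. ends e = (s, t) \<or> (\<not> directed \<and> ends e = (t, s)))))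
     \<and> (simple_game V (VPCG directed ends E s t) \<longrightarrow>
       (core V (dual_game V (VPCG directed ends E s t)) \<noteq> {} \<longleftrightarrow>
        (\<exists>x\<in>V. (s, x) \<in> step directed ends E \<and> (x, t) \<in> step directed ends E)))"
proof (intro conjI impI)
  have "s \<noteq> t" using G unfolding graph_def by simp
  let ?v = "EPCG directed ends s t" and ?w = "VPCG directed ends E s t"
  show "core E ?v \<noteq> {} \<longleftrightarrow> (\<exists>e\<in>E. \<not> connects directed ends (E - {e}) s t)"
    if "simple_game E ?v"
    using core_nonempty_iff_veto_player[OF that] by (simp add: EPCG_def)
  show "core V ?w \<noteq> {} \<longleftrightarrow>
      (\<exists>x\<in>V. \<not> connects directed ends (induced_edges ends E ((V - {x}) \<union> {s, t})) s t)"
    if "simple_game V ?w"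
    using core_nonempty_iff_veto_player[OF that] by (simp add: VPCG_def)
  show "core E (dual_game E ?v) \<noteq> {} \<longleftrightarrow>
      (\<exists>e\<in>E. ends e = (s, t) \<or> (\<not> directed \<and> ends e = (t, s)))"
    if "simple_game E ?v"
    using core_dual_game_nonempty_iff[OF that]
    by (simp add: EPCG_def connects_singleton_iff[OF \<open>s \<noteq> t\<close>])
  show "core V (dual_game V ?w) \<noteq> {} \<longleftrightarrow>
      (\<exists>x\<in>V. (s, x) \<in> step directed ends E \<and> (x, t) \<in> step directed ends E)"
    if "simple_game V ?w"
    using core_dual_game_nonempty_iff[OF that] VPCG_singleton_iff[OF simple_gameD(4)[OF that]]
    by simp
qed

end
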